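(* For all integers $k,n\ge 1$, \begin{align*} \zeta^*(k+1,\underbrace{1,\dots,1}_{n})&=(-1)^{k-1}\Big[\sum_{j=0}^{k-2}\zeta(n+1,\underbrace{1,\dots,1}_{j},2,\underbrace{1,\dots,1}_{k-2-j})+(n+1)\,\zeta(n+2,\underbrace{1,\dots,1}_{k-1})\Big]\\ &\quad+\sum_{r=0}^{k-2}(-1)^r\zeta(k-r)\,\zeta(n+1,\underbrace{1,\dots,1}_{r}), \end{align*} where an empty sum equals $0$.
   Context: For positive integers $k_1,\dots,k_n$ with $k_1\ge 2$, $\zeta(k_1,\dots,k_n)=\sum_{m_1>\dots>m_n\ge 1}\prod_i m_i^{-k_i}$ and $\zeta^*(k_1,\dots,k_n)=\sum_{m_1\ge\dots\ge m_n\ge 1}\prod_i m_i^{-k_i}$. $\underbrace{1,\dots,1}_{r}$ denotes $r$ entries equal to $1$ (none if $r=0$). *)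

theory Defs
  imports "HOL-Analysis.Analysis"
begin

text \<open>An index tuple (m_1,...,m_n) is a list of positive
naturals; for zeta it is strictly decreasing, for zeta-star weakly decreasing.
The value is the (unconditional, terms are nonnegative) sum over all such tuples.\<close>

definition mzv :: "nat list \<Rightarrow> real" where
  "mzv ks = infsum (\<lambda>ms. \<Prod>i<length ks. 1 / real (ms ! i) ^ (ks ! i))
     {ms. length ms = length ks \<and> sorted_wrt (>) ms \<and> (\<forall>m\<in>set ms. 1 \<le> m)}"

definition mzv_star :: "nat list \<Rightarrow> real" where
  "mzv_star ks = infsum (\<lambda>ms. \<Prod>i<length ks. 1 / real (ms ! i) ^ (ks ! i))
     {ms. length ms = length ks \<and> sorted_wrt (\<ge>) ms \<and> (\<forall>m\<in>set ms. 1 \<le> m)}"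

end

theory Submission
  imports Defs
begin

text \<open>
  Let \<open>h\<^sub>n(c)\<close> be \<open>\<zeta>\<^sup>\<star>(1,\<dots>,1)\<close> (\<open>n\<close> ones) truncated to indices \<open>\<le> c\<close>, so that
  \<open>\<zeta>\<^sup>\<star>(k+1,1,\<dots>,1) = \<Sum>\<^sub>c h\<^sub>n(c) / c^(k+1)\<close>, and let \<open>\<beta>\<^sub>n(b)\<close> be the part of \<open>\<zeta>(1,\<dots>,1)\<close>
  whose largest index is \<open>b\<close>. The connected sums of Seki and Yamamoto, built on the connector
  \<open>C(a,b) = a! b! / (a+b)!\<close> and its transport relations, give \<open>h\<^sub>n(c) = \<Sum>\<^sub>b \<beta>\<^sub>n(b) c / (b+c)\<close>;
  hence \<open>\<zeta>\<^sup>\<star>(k+1,1,\<dots>,1) = \<Sum>\<^sub>b \<beta>\<^sub>n(b) \<Sum>\<^sub>c 1 / (c^k (b+c))\<close>. Expanding \<open>1 / (c^k (b+c))\<close> in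
  partial fractions in \<open>c\<close> turns the inner sum into
  \<open>\<Sum>\<^sub>r\<^sub><\<^sub>k\<^sub>-\<^sub>1 (-1)^r \<zeta>(k-r) / b^(r+1) + (-1)^(k-1) H\<^sub>b / b^k\<close>.
  The same technique proves the duality \<open>\<Sum>\<^sub>b \<beta>\<^sub>n(b) / b^(r+1) = \<zeta>(n+1,1,\<dots>,1)\<close> and, with \<open>C\<close>
  replaced by \<open>C(a,b) (H\<^sub>a\<^sub>+\<^sub>b - H\<^sub>a)\<close> (minus its derivative in \<open>a\<close>), identifies
  \<open>\<Sum>\<^sub>b H\<^sub>b \<beta>\<^sub>n(b) / b^k\<close> with the bracket of \<open>\<zeta>\<close>-values containing one index 2.
  Rearrangements are done in \<open>ennreal\<close>, where Tonelli is free, and the convergence of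
  \<open>\<zeta>\<^sup>\<star>(k+1,1,\<dots>,1)\<close> comes out of the identity itself.
\<close>

section \<open>Series of nonnegative terms\<close>

lemma infsum_nonneg_eq_lim:
  fixes f :: "'a \<Rightarrow> real"
  assumes nonneg: "\<And>x. x \<in> A \<Longrightarrow> f x \<ge> 0"
    and fin: "\<And>N. finite (T N)" and sub: "\<And>N. T N \<subseteq> A" and mono: "mono T"
    and cover: "\<And>F. finite F \<Longrightarrow> F \<subseteq> A \<Longrightarrow> \<exists>N. F \<subseteq> T N"
    and lim: "(\<lambda>N. sum f (T N)) \<longlonglongrightarrow> L"
  shows "infsum f A = L"
proof -
  have le_T: "sum f F \<le> sum f (T N)" if "F \<subseteq> T N" for F N
    using that sub nonneg by (intro sum_mono2 fin) auto
  have "incseq (\<lambda>N. sum f (T N))"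
    using mono by (intro monoI le_T) (auto dest: monoD)
  then have le_L: "sum f (T N) \<le> L" for N
    using lim by (rule incseq_le)
  have le_L': "sum f F \<le> L" if "finite F" "F \<subseteq> A" for F
    using cover[OF that] le_T le_L by (meson order_trans)
  have "infsum f A = (SUP F\<in>{F. finite F \<and> F \<subseteq> A}. sum f F)"
    using nonneg le_L' by (intro nonneg_bdd_above_infsum bdd_aboveI2[where M = L]) auto
  also have "\<dots> = L"
  proof (rule antisym)
    show "(SUP F\<in>{F. finite F \<and> F \<subseteq> A}. sum f F) \<le> L"
      using le_L' by (intro cSUP_least) auto
    have "sum f (T N) \<le> (SUP F\<in>{F. finite F \<and> F \<subseteq> A}. sum f F)" for N
      using fin sub le_L' by (intro cSUP_upper bdd_aboveI2[where M = L]) auto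
    then show "L \<le> (SUP F\<in>{F. finite F \<and> F \<subseteq> A}. sum f F)"
      using lim by (intro LIMSEQ_le_const2[of _ L]) auto
  qed
  finally show ?thesis .
qed

lemma LIMSEQ_sum_atLeast1_atMost:
  fixes u :: "nat \<Rightarrow> real"
  assumes "u 0 = 0" and "summable u"
  shows "(\<lambda>N. \<Sum>a=1..N. u a) \<longlonglongrightarrow> suminf u"
proof -
  have "(\<Sum>a=1..N. u a) = (\<Sum>a<Suc N. u a)" for N
    using sum_shift_lb_Suc0_0[of u N] assms(1) by (simp add: atLeast0AtMost lessThan_Suc_atMost)
  then show ?thesis
    using LIMSEQ_Suc[OF summable_LIMSEQ[OF assms(2)]] by simp
qed

lemma suminf_ennreal_imp_sums:
  fixes f :: "nat \<Rightarrow> real"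
  assumes "\<And>i. f i \<ge> 0" and "x \<ge> 0" and "(\<Sum>i. ennreal (f i)) = ennreal x"
  shows "f sums x"
proof -
  have "(\<lambda>i. ennreal (f i)) sums ennreal x"
    using summable_sums[OF summableI, of "\<lambda>i. ennreal (f i)"] assms(3) by simp
  then show ?thesis
    using assms(1,2) by simp
qed

lemma summable_if_suminf_ennreal_eq:
  fixes f :: "nat \<Rightarrow> real"
  assumes "(\<Sum>i. ennreal (f i)) = (\<Sum>i. ennreal (g i))" and "summable g"
    and "\<And>i. f i \<ge> 0" and "\<And>i. g i \<ge> 0"
  shows "summable f"
  using assms by (intro summable_suminf_not_top) (auto simp: ennreal_suminf_neq_top)

lemma suminf_ennreal_cmult_nonneg:
  "c \<ge> 0 \<Longrightarrow> (\<And>i. f i \<ge> 0) \<Longrightarrow> (\<Sum>i. ennreal (c * f i)) = ennreal c * (\<Sum>i. ennreal (f i))"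
  by (simp add: ennreal_mult)

lemma suminf_ennreal_multc_nonneg:
  "c \<ge> 0 \<Longrightarrow> (\<And>i. f i \<ge> 0) \<Longrightarrow> (\<Sum>i. ennreal (f i * c)) = (\<Sum>i. ennreal (f i)) * ennreal c"
  by (simp add: ennreal_mult)

lemma suminf_ennreal_commute:
  fixes f :: "nat \<Rightarrow> nat \<Rightarrow> ennreal"
  shows "(\<Sum>i. \<Sum>j. f i j) = (\<Sum>j. \<Sum>i. f i j)"
proof -
  have le: "(\<Sum>i. \<Sum>j. g i j) \<le> (\<Sum>j. \<Sum>i. g i j)" for g :: "nat \<Rightarrow> nat \<Rightarrow> ennreal"
  proof -
    have "(\<Sum>i<n. \<Sum>j. g i j) \<le> (\<Sum>j. \<Sum>i. g i j)" for n
    proof -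
      have "(\<Sum>i<n. \<Sum>j. g i j) = (\<Sum>j. \<Sum>i<n. g i j)"
        by (rule suminf_sum[symmetric]) auto
      also have "\<dots> \<le> (\<Sum>j. \<Sum>i. g i j)"
        by (intro suminf_le) (auto intro!: sum_le_suminf)
      finally show ?thesis .
    qed
    then show ?thesis
      by (simp add: suminf_eq_SUP SUP_least)
  qed
  show ?thesis
    using le[of f] le[of "\<lambda>j i. f i j"] by (rule antisym)
qed

lemma suminf_ennreal_triangle:
  fixes h :: "nat \<Rightarrow> nat \<Rightarrow> real"
  assumes "\<And>i j. h i j \<ge> 0"
  shows "(\<Sum>j. ennreal (\<Sum>i<j. h i j)) = (\<Sum>i. \<Sum>j. ennreal (if i < j then h i j else 0))"
proof -
  have "ennreal (\<Sum>i<j. h i j) = (\<Sum>i. ennreal (if i < j then h i j else 0))" for j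
    using assms by (subst suminf_finite[of "{..<j}"]) auto
  then show ?thesis
    by (simp add: suminf_ennreal_commute[of "\<lambda>j i. ennreal (if i < j then h i j else 0)"])
qed

lemma suminf_ennreal_telescope_tail:
  fixes w F :: "nat \<Rightarrow> real"
  assumes step: "\<And>j. w (Suc j) = F j - F (Suc j)" and nonneg: "\<And>j. w j \<ge> 0"
    and lim: "F \<longlonglongrightarrow> 0"
  shows "(\<Sum>j. ennreal (if i < j then w j else 0)) = ennreal (F i)"
proof -
  define g where "g j = (if i < j then w j else 0)" for j
  have "(\<lambda>n. F (n + i) - F (Suc n + i)) sums F i"
    using telescope_sums'[OF LIMSEQ_ignore_initial_segment[OF lim, of i]] by simp
  then have "(\<lambda>n. g (n + Suc i)) sums F i"
    by (simp add: g_def step)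
  then have "g sums (F i + (\<Sum>j<Suc i. g j))"
    by (rule iffD1[OF sums_iff_shift])
  then have "g sums F i"
    by (simp add: g_def)
  then show ?thesis
    unfolding g_def[symmetric] by (rule suminf_ennreal_eq[rotated]) (simp add: g_def nonneg)
qed

section \<open>Multiple zeta values as iterated series\<close>

definition mzv_summand :: "nat list \<Rightarrow> nat list \<Rightarrow> real" where
  "mzv_summand ks ms = (\<Prod>i<length ks. 1 / real (ms ! i) ^ (ks ! i))"

definition index_lists_upto :: "(nat \<Rightarrow> nat \<Rightarrow> bool) \<Rightarrow> nat \<Rightarrow> nat \<Rightarrow> nat list set" where
  "index_lists_upto R l N = {ms. length ms = l \<and> sorted_wrt R ms \<and> (\<forall>m\<in>set ms. 1 \<le> m \<and> m \<le> N)}"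

fun mzv_trunc :: "nat list \<Rightarrow> nat \<Rightarrow> real" where
  "mzv_trunc [] N = 1"
| "mzv_trunc (s # ks) N = (\<Sum>a=1..N. mzv_trunc ks (a - 1) / real a ^ s)"

fun mzv_star_trunc :: "nat list \<Rightarrow> nat \<Rightarrow> real" where
  "mzv_star_trunc [] N = 1"
| "mzv_star_trunc (s # ks) N = (\<Sum>a=1..N. mzv_star_trunc ks a / real a ^ s)"

lemma mzv_summand_Nil [simp]: "mzv_summand [] ms = 1"
  by (simp add: mzv_summand_def)

lemma mzv_summand_Cons [simp]: "mzv_summand (s # ks) (a # ms) = mzv_summand ks ms / real a ^ s"
  by (simp add: mzv_summand_def prod.lessThan_Suc_shift del: prod.lessThan_Suc)

lemma mzv_summand_nonneg: "mzv_summand ks ms \<ge> 0"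
  by (simp add: mzv_summand_def prod_nonneg)

lemma mzv_trunc_nonneg: "mzv_trunc ks N \<ge> 0"
  by (induction ks arbitrary: N) (auto intro!: sum_nonneg)

lemma mzv_star_trunc_nonneg: "mzv_star_trunc ks N \<ge> 0"
  by (induction ks arbitrary: N) (auto intro!: sum_nonneg)

lemma mzv_nonneg: "mzv ks \<ge> 0"
  unfolding mzv_def by (intro infsum_nonneg prod_nonneg) auto

lemma finite_index_lists_upto: "finite (index_lists_upto R l N)"
proof (rule finite_subset)
  show "index_lists_upto R l N \<subseteq> {ms. set ms \<subseteq> {1..N} \<and> length ms = l}"
    by (auto simp: index_lists_upto_def)
qed (simp add: finite_lists_length_eq)

lemma index_lists_upto_0 [simp]: "index_lists_upto R 0 N = {[]}"
  by (auto simp: index_lists_upto_def)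

lemma index_lists_upto_Cons_less:
  "index_lists_upto (>) (Suc l) N
      = (\<lambda>(a, ms). a # ms) ` (SIGMA a:{1..N}. index_lists_upto (>) l (a - 1))"
proof (intro equalityI subsetI)
  fix ms assume "ms \<in> index_lists_upto (>) (Suc l) N"
  then show "ms \<in> (\<lambda>(a, ms). a # ms) ` (SIGMA a:{1..N}. index_lists_upto (>) l (a - 1))"
    by (cases ms) (fastforce simp: index_lists_upto_def)+
qed (force simp: index_lists_upto_def)

lemma index_lists_upto_Cons_le:
  "index_lists_upto (\<ge>) (Suc l) N = (\<lambda>(a, ms). a # ms) ` (SIGMA a:{1..N}. index_lists_upto (\<ge>) l a)"
proof (intro equalityI subsetI)
  fix ms assume "ms \<in> index_lists_upto (\<ge>) (Suc l) N"
  then show "ms \<in> (\<lambda>(a, ms). a # ms) ` (SIGMA a:{1..N}. index_lists_upto (\<ge>) l a)"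
    by (cases ms) (fastforce simp: index_lists_upto_def)+
qed (force simp: index_lists_upto_def)

lemma sum_mzv_summand_less: "sum (mzv_summand ks) (index_lists_upto (>) (length ks) N) = mzv_trunc ks N"
proof (induction ks arbitrary: N)
  case Nil
  then show ?case by simp
next
  case (Cons s ks)
  have "sum (mzv_summand (s # ks)) (index_lists_upto (>) (length (s # ks)) N)
      = (\<Sum>(a, ms)\<in>(SIGMA a:{1..N}. index_lists_upto (>) (length ks) (a - 1)). mzv_summand ks ms / real a ^ s)"
    by (simp add: index_lists_upto_Cons_less sum.reindex inj_on_def case_prod_unfold)
  also have "\<dots> = (\<Sum>a=1..N. mzv_trunc ks (a - 1) / real a ^ s)"
    by (simp add: sum.Sigma[symmetric] finite_index_lists_upto sum_divide_distrib[symmetric] Cons.IH)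
  finally show ?case by simp
qed

lemma sum_mzv_summand_le: "sum (mzv_summand ks) (index_lists_upto (\<ge>) (length ks) N) = mzv_star_trunc ks N"
proof (induction ks arbitrary: N)
  case Nil
  then show ?case by simp
next
  case (Cons s ks)
  have "sum (mzv_summand (s # ks)) (index_lists_upto (\<ge>) (length (s # ks)) N)
      = (\<Sum>(a, ms)\<in>(SIGMA a:{1..N}. index_lists_upto (\<ge>) (length ks) a). mzv_summand ks ms / real a ^ s)"
    by (simp add: index_lists_upto_Cons_le sum.reindex inj_on_def case_prod_unfold)
  also have "\<dots> = (\<Sum>a=1..N. mzv_star_trunc ks a / real a ^ s)"
    by (simp add: sum.Sigma[symmetric] finite_index_lists_upto sum_divide_distrib[symmetric] Cons.IH)
  finally show ?case by simp
qed

lemma infsum_mzv_summand_eq_lim: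
  assumes "(\<lambda>N. sum (mzv_summand ks) (index_lists_upto R (length ks) N)) \<longlonglongrightarrow> L"
  shows "infsum (mzv_summand ks) {ms. length ms = length ks \<and> sorted_wrt R ms \<and> (\<forall>m\<in>set ms. 1 \<le> m)} = L"
proof (rule infsum_nonneg_eq_lim[OF mzv_summand_nonneg finite_index_lists_upto _ _ _ assms])
  show "index_lists_upto R (length ks) N
      \<subseteq> {ms. length ms = length ks \<and> sorted_wrt R ms \<and> (\<forall>m\<in>set ms. 1 \<le> m)}" for N
    by (auto simp: index_lists_upto_def)
  show "mono (index_lists_upto R (length ks))"
    by (auto simp: mono_def index_lists_upto_def)
  show "\<exists>N. F \<subseteq> index_lists_upto R (length ks) N"
    if "finite F" "F \<subseteq> {ms. length ms = length ks \<and> sorted_wrt R ms \<and> (\<forall>m\<in>set ms. 1 \<le> m)}" for F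
  proof
    have "finite (\<Union>ms\<in>F. set ms)"
      using that(1) by simp
    then show "F \<subseteq> index_lists_upto R (length ks) (Max (\<Union>ms\<in>F. set ms))"
      using that(2) by (auto simp: index_lists_upto_def intro!: Max_ge)
  qed
qed

lemma mzv_Cons_sums:
  assumes "s \<ge> 1" and summable: "summable (\<lambda>a. mzv_trunc ks (a - 1) / real a ^ s)"
  shows "(\<lambda>a. mzv_trunc ks (a - 1) / real a ^ s) sums mzv (s # ks)"
proof -
  have "mzv (s # ks) = (\<Sum>a. mzv_trunc ks (a - 1) / real a ^ s)"
    unfolding mzv_def mzv_summand_def[symmetric]
  proof (rule infsum_mzv_summand_eq_lim)
    show "(\<lambda>N. sum (mzv_summand (s # ks)) (index_lists_upto (>) (length (s # ks)) N))
        \<longlonglongrightarrow> (\<Sum>a. mzv_trunc ks (a - 1) / real a ^ s)"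
      unfolding sum_mzv_summand_less mzv_trunc.simps(2)[abs_def] using assms
      by (intro LIMSEQ_sum_atLeast1_atMost) auto
  qed
  then show ?thesis
    using summable by (simp add: summable_sums)
qed

lemma mzv_star_Cons_sums:
  assumes "s \<ge> 1" and summable: "summable (\<lambda>a. mzv_star_trunc ks a / real a ^ s)"
  shows "(\<lambda>a. mzv_star_trunc ks a / real a ^ s) sums mzv_star (s # ks)"
proof -
  have "mzv_star (s # ks) = (\<Sum>a. mzv_star_trunc ks a / real a ^ s)"
    unfolding mzv_star_def mzv_summand_def[symmetric]
  proof (rule infsum_mzv_summand_eq_lim)
    show "(\<lambda>N. sum (mzv_summand (s # ks)) (index_lists_upto (\<ge>) (length (s # ks)) N))
        \<longlonglongrightarrow> (\<Sum>a. mzv_star_trunc ks a / real a ^ s)"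
      unfolding sum_mzv_summand_le mzv_star_trunc.simps(2)[abs_def] using assms
      by (intro LIMSEQ_sum_atLeast1_atMost) auto
  qed
  then show ?thesis
    using summable by (simp add: summable_sums)
qed

lemma mzv_singleton_sums: "s \<ge> 2 \<Longrightarrow> (\<lambda>c. 1 / real c ^ s) sums mzv [s]"
  using mzv_Cons_sums[of s "[]"] inverse_power_summable[of s] by (simp add: inverse_eq_divide)

section \<open>The connector\<close>

definition connector :: "nat \<Rightarrow> nat \<Rightarrow> real" where
  "connector a b = fact a * fact b / fact (a + b)"

definition harm_gap :: "nat \<Rightarrow> nat \<Rightarrow> real" where
  "harm_gap a b = (\<Sum>j=1..b. 1 / real (a + j))"

definition connector_harm :: "nat \<Rightarrow> nat \<Rightarrow> real" where
  "connector_harm a b = connector a b * harm_gap a b"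

lemma connector_nonneg: "connector a b \<ge> 0"
  by (simp add: connector_def)

lemma connector_commute: "connector a b = connector b a"
  by (simp add: connector_def add.commute mult.commute)

lemma connector_0_left [simp]: "connector 0 b = 1"
  and connector_0_right [simp]: "connector a 0 = 1"
  by (simp_all add: connector_def)

lemma connector_Suc_right: "connector a (Suc b) * real (a + Suc b) = connector a b * real (Suc b)"
proof -
  have "(fact (a + Suc b) :: real) = fact (a + b) * real (a + Suc b)"
    by (simp add: algebra_simps)
  moreover have "(fact (Suc b) :: real) = fact b * real (Suc b)"
    by (simp add: algebra_simps)
  ultimately show ?thesis
    by (simp add: connector_def)
qed

lemma connector_Suc_left: "connector (Suc a) b * real (Suc a + b) = connector a b * real (Suc a)"
  using connector_Suc_right[of b a] by (simp add: connector_commute add.commute)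

lemma connector_le: "a \<ge> 1 \<Longrightarrow> connector a b \<le> 1 / real (Suc b)"
proof (induction a rule: dec_induct)
  case base
  then show ?case by (simp add: connector_def)
next
  case (step a)
  have "connector (Suc a) b = connector a b * (real (Suc a) / real (Suc a + b))"
    using connector_Suc_left[of a b] by (simp add: field_simps)
  also have "\<dots> \<le> connector a b"
    using connector_nonneg[of a b] by (intro mult_left_le) auto
  finally show ?case using step.IH by simp
qed

lemma connector_le_1: "connector a b \<le> 1"
proof (cases "a = 0")
  case False
  then have "connector a b \<le> 1 / real (Suc b)" by (intro connector_le) auto
  also have "\<dots> \<le> 1" by simp
  finally show ?thesis .
qed simp

lemma harm_gap_0_left [simp]: "harm_gap 0 b = harm b"
  by (simp add: harm_gap_def harm_def inverse_eq_divide)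

lemma harm_gap_0_right [simp]: "harm_gap a 0 = 0"
  by (simp add: harm_gap_def)

lemma harm_gap_nonneg: "harm_gap a b \<ge> 0"
  by (simp add: harm_gap_def sum_nonneg)

lemma harm_gap_Suc_right: "harm_gap a (Suc b) = harm_gap a b + 1 / real (a + Suc b)"
  by (simp add: harm_gap_def)

lemma harm_gap_Suc_left: "harm_gap (Suc a) b = harm_gap a b + 1 / real (Suc a + b) - 1 / real (Suc a)"
  by (induction b) (simp_all add: harm_gap_Suc_right)

lemma harm_gap_le: "harm_gap a b \<le> real b / real (Suc a)"
proof -
  have "harm_gap a b \<le> (\<Sum>j=1..b. 1 / real (Suc a))"
    unfolding harm_gap_def by (intro sum_mono) (auto simp: frac_le)
  then show ?thesis by simp
qed

lemma harm_gap_le_harm: "harm_gap a b \<le> harm b"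
  unfolding harm_gap_def harm_def by (intro sum_mono) (auto simp: inverse_eq_divide frac_le)

lemma connector_harm_nonneg: "connector_harm a b \<ge> 0"
  by (simp add: connector_harm_def connector_nonneg harm_gap_nonneg)

lemma connector_harm_0_right [simp]: "connector_harm a 0 = 0"
  by (simp add: connector_harm_def)

lemma connector_harm_0_left [simp]: "connector_harm 0 b = harm b"
  by (simp add: connector_harm_def)

lemma connector_diff_Suc_right: "connector a j - connector a (Suc j) = real a * connector a (Suc j) / real (Suc j)"
  using connector_Suc_right[of a j] by (simp add: field_simps)

lemma connector_diff_Suc_left: "connector j b - connector (Suc j) b = real b * connector (Suc j) b / real (Suc j)"
  using connector_diff_Suc_right[of b j] by (simp add: connector_commute)

lemma connector_harm_diff_Suc_right:
  "connector_harm a j - connector_harm a (Suc j)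
     = (real a * connector_harm a (Suc j) - connector a (Suc j)) / real (Suc j)"
proof -
  have alg: "x * (a' + s) / s * (y - 1 / (a' + s)) - x * y = (a' * (x * y) - x) / s"
    if "s \<noteq> 0" "a' + s \<noteq> 0" for x y s a' :: real
    using that by (simp add: divide_simps right_diff_distrib) (simp add: algebra_simps)
  have C: "connector a j = connector a (Suc j) * (real a + real (Suc j)) / real (Suc j)"
    using connector_Suc_right[of a j] by (simp add: field_simps)
  have H: "harm_gap a j = harm_gap a (Suc j) - 1 / (real a + real (Suc j))"
    by (simp add: harm_gap_Suc_right)
  show ?thesis
    unfolding connector_harm_def C H by (rule alg) auto
qed

lemma connector_harm_diff_Suc_left:
  "connector_harm j b - connector_harm (Suc j) b
     = real b * connector_harm (Suc j) b / real (Suc j) + real b * connector (Suc j) b / real (Suc j) ^ 2"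
proof -
  have alg: "x * (b' + s) / s * (y - 1 / (b' + s) + 1 / s) - x * y = b' * (x * y) / s + b' * x / s ^ 2"
    if "s \<noteq> 0" "b' + s \<noteq> 0" for x y s b' :: real
    using that by (simp add: divide_simps power2_eq_square right_diff_distrib) (simp add: algebra_simps)
  have C: "connector j b = connector (Suc j) b * (real b + real (Suc j)) / real (Suc j)"
    using connector_Suc_left[of j b] by (simp add: field_simps)
  have H: "harm_gap j b = harm_gap (Suc j) b - 1 / (real b + real (Suc j)) + 1 / real (Suc j)"
    by (simp add: harm_gap_Suc_left)
  show ?thesis
    unfolding connector_harm_def C H by (rule alg) auto
qed

lemma harm_gap_diff_Suc_left: "harm_gap j c - harm_gap (Suc j) c = real c / (real (Suc j) * real (Suc j + c))"
proof -
  have "harm_gap j c - harm_gap (Suc j) c = 1 / real (Suc j) - 1 / real (Suc j + c)"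
    by (simp add: harm_gap_Suc_left)
  also have "\<dots> = real c / (real (Suc j) * real (Suc j + c))"
    by (simp add: divide_simps)
  finally show ?thesis .
qed

lemma harm_div_tendsto_0: "(\<lambda>n. harm n / real n) \<longlonglongrightarrow> (0 :: real)"
proof -
  have "(\<lambda>n. (harm n - ln (real n)) * (1 / real n) + ln (real n) / real n)
          \<longlonglongrightarrow> euler_mascheroni * 0 + 0"
    by (intro tendsto_intros euler_mascheroni_LIMSEQ lim_ln_over_n)
  moreover have "(\<lambda>n. (harm n - ln (real n)) * (1 / real n) + ln (real n) / real n)
      = (\<lambda>n. harm n / real n)"
    by (simp add: diff_divide_distrib)
  ultimately show ?thesis
    by simp
qed

lemma const_div_Suc_tendsto_0: "(\<lambda>j. c / real (Suc j)) \<longlonglongrightarrow> (0 :: real)"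
  using tendsto_mult_right_zero[OF LIMSEQ_Suc[OF lim_1_over_n], of c] by simp

lemma connector_tendsto_0:
  assumes "a \<ge> 1"
  shows "(\<lambda>j. connector a j) \<longlonglongrightarrow> 0"
proof (rule Lim_null_comparison[OF always_eventually const_div_Suc_tendsto_0[of 1]], intro allI)
  show "norm (connector a j) \<le> 1 / real (Suc j)" for j
    using connector_le[OF assms, of j] by (simp add: connector_nonneg)
qed

lemma connector_tendsto_0_left: "b \<ge> 1 \<Longrightarrow> (\<lambda>j. connector j b) \<longlonglongrightarrow> 0"
  by (subst connector_commute) (rule connector_tendsto_0)

lemma harm_gap_tendsto_0: "(\<lambda>j. harm_gap j c) \<longlonglongrightarrow> 0"
proof (rule Lim_null_comparison[OF always_eventually const_div_Suc_tendsto_0[of "real c"]], intro allI)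
  show "norm (harm_gap j c) \<le> real c / real (Suc j)" for j
    using harm_gap_le[of j c] by (simp add: harm_gap_nonneg)
qed

lemma connector_harm_tendsto_0_left: "(\<lambda>j. connector_harm j b) \<longlonglongrightarrow> 0"
proof (rule Lim_null_comparison[OF always_eventually harm_gap_tendsto_0], intro allI)
  fix j
  have "connector_harm j b \<le> 1 * harm_gap j b"
    unfolding connector_harm_def by (intro mult_right_mono connector_le_1 harm_gap_nonneg)
  then show "norm (connector_harm j b) \<le> harm_gap j b"
    by (simp add: connector_harm_nonneg)
qed

lemma connector_harm_tendsto_0:
  assumes "a \<ge> 1"
  shows "(\<lambda>j. connector_harm a j) \<longlonglongrightarrow> 0"
proof (rule Lim_null_comparison[OF _ harm_div_tendsto_0])
  have "connector_harm a j \<le> harm j / real j" if "j \<ge> 1" for j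
  proof -
    have "connector_harm a j \<le> (1 / real j) * harm j"
      unfolding connector_harm_def
    proof (intro mult_mono harm_gap_le_harm)
      have "1 / real (Suc j) \<le> 1 / real j"
        using that by (intro divide_left_mono) auto
      then show "connector a j \<le> 1 / real j"
        using connector_le[OF assms, of j] by linarith
    qed (simp_all add: harm_gap_nonneg)
    then show ?thesis by simp
  qed
  then show "\<forall>\<^sub>F j in sequentially. norm (connector_harm a j) \<le> harm j / real j"
    by (intro eventually_sequentiallyI[of 1]) (simp add: connector_harm_nonneg)
qed

lemma connector_tail_right:
  assumes a: "a \<ge> 1" and p: "p \<ge> 0" and q: "q \<ge> 0"
  shows "(\<Sum>j. ennreal (if i < j then (p * connector a j + q * connector_harm a j) / real j else 0))
       = ennreal ((p / real a + q / real a ^ 2) * connector a i + q / real a * connector_harm a i)"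
proof (rule suminf_ennreal_telescope_tail)
  fix j
  have "(p / real a + q / real a ^ 2) * connector a j + q / real a * connector_harm a j
        - ((p / real a + q / real a ^ 2) * connector a (Suc j) + q / real a * connector_harm a (Suc j))
      = (p / real a + q / real a ^ 2) * (connector a j - connector a (Suc j))
        + q / real a * (connector_harm a j - connector_harm a (Suc j))"
    by (simp add: diff_divide_distrib algebra_simps)
  also have "\<dots> = (p * connector a (Suc j) + q * connector_harm a (Suc j)) / real (Suc j)"
  proof -
    have alg: "(p / a' + q / a' ^ 2) * (a' * x / s) + q / a' * ((a' * y - x) / s) = (p * x + q * y) / s"
      if "a' \<noteq> 0" "s \<noteq> 0" for x y s a' :: real
      using that by (simp add: field_simps power2_eq_square)
    show ?thesis
      unfolding connector_diff_Suc_right connector_harm_diff_Suc_right using a by (intro alg) auto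
  qed
  finally show "(p * connector a (Suc j) + q * connector_harm a (Suc j)) / real (Suc j)
      = (p / real a + q / real a ^ 2) * connector a j + q / real a * connector_harm a j
        - ((p / real a + q / real a ^ 2) * connector a (Suc j) + q / real a * connector_harm a (Suc j))"
    by simp
next
  show "0 \<le> (p * connector a j + q * connector_harm a j) / real j" for j
    using p q by (simp add: connector_nonneg connector_harm_nonneg)
next
  show "(\<lambda>j. (p / real a + q / real a ^ 2) * connector a j + q / real a * connector_harm a j) \<longlonglongrightarrow> 0"
    by (intro tendsto_add_zero tendsto_mult_right_zero connector_tendsto_0 connector_harm_tendsto_0 a)
qed

lemma connector_tail_left:
  assumes b: "b \<ge> 1" and p: "p \<ge> 0" and q: "q \<ge> 0"
  shows "(\<Sum>j. ennreal (if i < j then (p / real j + q / real j ^ 2) * connector j b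
      + q / real j * connector_harm j b else 0))
       = ennreal ((p * connector i b + q * connector_harm i b) / real b)"
proof (rule suminf_ennreal_telescope_tail)
  fix j
  have "(p * connector j b + q * connector_harm j b) / real b
        - (p * connector (Suc j) b + q * connector_harm (Suc j) b) / real b
      = (p * (connector j b - connector (Suc j) b) + q * (connector_harm j b - connector_harm (Suc j) b)) / real b"
    by (simp add: algebra_simps diff_divide_distrib)
  also have "\<dots> = (p / real (Suc j) + q / real (Suc j) ^ 2) * connector (Suc j) b
      + q / real (Suc j) * connector_harm (Suc j) b"
  proof -
    have alg: "(p * (b' * x / s) + q * (b' * y / s + b' * x / s ^ 2)) / b'
        = (p / s + q / s ^ 2) * x + q / s * y"
      if "b' \<noteq> 0" "s \<noteq> 0" for x y s b' :: real
      using that by (simp add: field_simps power2_eq_square)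
    show ?thesis
      unfolding connector_diff_Suc_left connector_harm_diff_Suc_left using b by (intro alg) auto
  qed
  finally show "(p / real (Suc j) + q / real (Suc j) ^ 2) * connector (Suc j) b
      + q / real (Suc j) * connector_harm (Suc j) b
      = (p * connector j b + q * connector_harm j b) / real b - (p * connector (Suc j) b + q * connector_harm (Suc j) b) / real b"
    by simp
next
  show "0 \<le> (p / real j + q / real j ^ 2) * connector j b + q / real j * connector_harm j b" for j
    using p q by (simp add: connector_nonneg connector_harm_nonneg)
next
  show "(\<lambda>j. (p * connector j b + q * connector_harm j b) / real b) \<longlonglongrightarrow> 0"
    by (intro tendsto_divide_zero tendsto_add_zero tendsto_mult_right_zero
        connector_tendsto_0_left connector_harm_tendsto_0_left b)
qed

lemma harm_gap_tail:
  assumes "c \<ge> 1" and p: "p \<ge> 0"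
  shows "(\<Sum>j. ennreal (if i < j then p * (real c / (real j * real (j + c))) else 0))
      = ennreal (p * harm_gap i c)"
proof (rule suminf_ennreal_telescope_tail)
  show "p * (real c / (real (Suc j) * real (Suc j + c)))
      = p * harm_gap j c - p * harm_gap (Suc j) c" for j
    using harm_gap_diff_Suc_left[of j c] by (simp add: right_diff_distrib[symmetric])
  show "0 \<le> p * (real c / (real j * real (j + c)))" for j
    using p by simp
  show "(\<lambda>j. p * harm_gap j c) \<longlonglongrightarrow> 0"
    using tendsto_mult_right_zero[OF harm_gap_tendsto_0] by simp
qed

section \<open>Transport relations\<close>

definition cesaro_mean :: "(nat \<Rightarrow> real) \<Rightarrow> nat \<Rightarrow> real" where
  "cesaro_mean g b = (\<Sum>i<b. g i) / real b"

lemma cesaro_mean_0 [simp]: "cesaro_mean g 0 = 0"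
  by (simp add: cesaro_mean_def)

lemma cesaro_mean_nonneg: "(\<And>i. g i \<ge> 0) \<Longrightarrow> cesaro_mean g b \<ge> 0"
  by (simp add: cesaro_mean_def sum_nonneg)

lemma transport_right:
  assumes a: "a \<ge> 1" and p: "p \<ge> 0" and q: "q \<ge> 0" and g: "\<And>i. g i \<ge> 0"
  shows "(\<Sum>b. ennreal ((p * connector a b + q * connector_harm a b) * cesaro_mean g b))
       = (\<Sum>b. ennreal (((p / real a + q / real a ^ 2) * connector a b + q / real a * connector_harm a b) * g b))"
proof -
  have mean: "(p * connector a b + q * connector_harm a b) * cesaro_mean g b
      = (\<Sum>i<b. (g i * p * connector a b + g i * q * connector_harm a b) / real b)" for b
    unfolding cesaro_mean_def sum_divide_distrib sum_distrib_left
    by (intro sum.cong) (simp_all add: algebra_simps add_divide_distrib)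
  have "(\<Sum>b. ennreal ((p * connector a b + q * connector_harm a b) * cesaro_mean g b))
      = (\<Sum>i. \<Sum>b. ennreal (if i < b then (g i * p * connector a b + g i * q * connector_harm a b) / real b else 0))"
    unfolding mean using p q g
    by (intro suminf_ennreal_triangle) (simp add: connector_nonneg connector_harm_nonneg)
  also have "\<dots> = (\<Sum>i. ennreal ((g i * p / real a + g i * q / real a ^ 2) * connector a i
      + g i * q / real a * connector_harm a i))"
    using p q g by (simp add: connector_tail_right[OF a])
  finally show ?thesis
    by (simp add: algebra_simps)
qed

lemma transport_left:
  assumes b: "b \<ge> 1" and f: "\<And>i. f i \<ge> 0" and f': "\<And>i. f' i \<ge> 0"
  shows "(\<Sum>a. ennreal ((cesaro_mean f' a + cesaro_mean f a / real a) * connector a b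
      + cesaro_mean f a * connector_harm a b))
       = (\<Sum>a. ennreal ((f' a * connector a b + f a * connector_harm a b) / real b))"
proof -
  have mean: "(cesaro_mean f' a + cesaro_mean f a / real a) * connector a b
      + cesaro_mean f a * connector_harm a b
      = (\<Sum>i<a. (f' i / real a + f i / real a ^ 2) * connector a b + f i / real a * connector_harm a b)" for a
    by (simp add: cesaro_mean_def sum.distrib sum_distrib_left sum_distrib_right sum_divide_distrib power2_eq_square algebra_simps)
  have "(\<Sum>a. ennreal ((cesaro_mean f' a + cesaro_mean f a / real a) * connector a b
      + cesaro_mean f a * connector_harm a b))
      = (\<Sum>i. \<Sum>a. ennreal (if i < a then (f' i / real a + f i / real a ^ 2) * connector a b + f i / real a * connector_harm a b else 0))"
    unfolding mean using f f'
    by (intro suminf_ennreal_triangle) (simp add: connector_nonneg connector_harm_nonneg)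
  also have "\<dots> = (\<Sum>i. ennreal ((f' i * connector i b + f i * connector_harm i b) / real b))"
    using f f' by (simp add: connector_tail_left[OF b])
  finally show ?thesis .
qed

text \<open>
  \<open>ones_at r b\<close> is \<open>\<beta>\<^sub>r(b) = \<Sum> 1 / (m\<^sub>1 \<cdots> m\<^sub>r)\<close> over \<open>b = m\<^sub>1 > \<cdots> > m\<^sub>r \<ge> 1\<close>;
  \<open>ones_two_at r b\<close> is the analogous part of \<open>\<Sum>\<^sub>j\<^sub><\<^sub>r \<zeta>(1,\<dots>,1,2,1,\<dots>,1)\<close>, the 2 in position \<open>j+1\<close>.
\<close>

primrec ones_at :: "nat \<Rightarrow> nat \<Rightarrow> real" where
  "ones_at 0 = (\<lambda>b. if b = 0 then 1 else 0)"
| "ones_at (Suc r) = cesaro_mean (ones_at r)"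

primrec ones_two_at :: "nat \<Rightarrow> nat \<Rightarrow> real" where
  "ones_two_at 0 = (\<lambda>a. 0)"
| "ones_two_at (Suc r) = (\<lambda>a. cesaro_mean (ones_two_at r) a + cesaro_mean (ones_at r) a / real a)"

lemma ones_at_nonneg: "ones_at r b \<ge> 0"
  by (induction r arbitrary: b) (auto intro!: cesaro_mean_nonneg)

lemma ones_two_at_nonneg: "ones_two_at r a \<ge> 0"
  by (induction r arbitrary: a)
     (auto intro!: add_nonneg_nonneg divide_nonneg_nonneg cesaro_mean_nonneg ones_at_nonneg)

lemma ones_at_0_right [simp]: "r \<ge> 1 \<Longrightarrow> ones_at r 0 = 0"
  by (cases r) auto

lemma ones_two_at_0_right [simp]: "ones_two_at r 0 = 0"
  by (cases r) auto

lemma ones_at_1: "ones_at 1 b = 1 / real b"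
  by (cases b) (auto simp: cesaro_mean_def)

lemma ones_two_at_1: "ones_two_at 1 a = 1 / real a ^ 2"
  by (simp add: cesaro_mean_def ones_at_1[simplified] power2_eq_square)

lemma mzv_trunc_ones: "mzv_trunc (replicate r 1) N = (\<Sum>i\<le>N. ones_at r i)"
proof (induction r arbitrary: N)
  case 0
  then show ?case by (simp add: atMost_atLeast0 sum.atLeast_Suc_atMost)
next
  case (Suc r)
  have "mzv_trunc (replicate (Suc r) 1) N = (\<Sum>a=1..N. (\<Sum>i<a. ones_at r i) / real a)"
    unfolding replicate_Suc mzv_trunc.simps
  proof (intro sum.cong refl)
    fix a assume "a \<in> {1..N}"
    then have "{..a - 1} = {..<a}" by auto
    then show "mzv_trunc (replicate r 1) (a - 1) / real a ^ 1 = (\<Sum>i<a. ones_at r i) / real a"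
      using Suc.IH[of "a - 1"] by simp
  qed
  also have "\<dots> = (\<Sum>i\<le>N. ones_at (Suc r) i)"
    by (simp add: cesaro_mean_def atMost_atLeast0 sum.atLeast_Suc_atMost)
  finally show ?case .
qed

lemma mzv_trunc_ones_pred:
  assumes "a \<ge> 1"
  shows "mzv_trunc (replicate r 1) (a - 1) = real a * ones_at (Suc r) a"
proof -
  have "{..a - 1} = {..<a}"
    using assms by auto
  then show ?thesis
    using assms mzv_trunc_ones[of r "a - 1"] by (simp add: cesaro_mean_def)
qed

lemma mzv_trunc_ones_two:
  "(\<Sum>j<r. mzv_trunc (replicate j 1 @ 2 # replicate (r - 1 - j) 1) N) = (\<Sum>i\<le>N. ones_two_at r i)"
proof (induction r arbitrary: N)
  case 0
  then show ?case by simp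
next
  case (Suc r)
  have below: "{..a - 1} = {..<a}" if "a \<in> {1..N}" for a
    using that by auto
  have first: "mzv_trunc (2 # replicate r 1) N = (\<Sum>a=1..N. ones_at (Suc r) a / real a)"
    unfolding mzv_trunc.simps
  proof (intro sum.cong refl)
    fix a assume "a \<in> {1..N}"
    then show "mzv_trunc (replicate r 1) (a - 1) / real a ^ 2 = ones_at (Suc r) a / real a"
      using mzv_trunc_ones_pred[of a r] by (simp add: power2_eq_square)
  qed
  have "(\<Sum>j<r. mzv_trunc (1 # replicate j 1 @ 2 # replicate (r - 1 - j) 1) N)
      = (\<Sum>j<r. \<Sum>a=1..N. mzv_trunc (replicate j 1 @ 2 # replicate (r - 1 - j) 1) (a - 1) / real a)"
    by simp
  also have "\<dots> = (\<Sum>a=1..N. \<Sum>j<r. mzv_trunc (replicate j 1 @ 2 # replicate (r - 1 - j) 1) (a - 1) / real a)"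
    by (rule sum.swap)
  also have "\<dots> = (\<Sum>a=1..N. (\<Sum>i<a. ones_two_at r i) / real a)"
  proof (intro sum.cong refl)
    fix a assume "a \<in> {1..N}"
    then show "(\<Sum>j<r. mzv_trunc (replicate j 1 @ 2 # replicate (r - 1 - j) 1) (a - 1) / real a)
        = (\<Sum>i<a. ones_two_at r i) / real a"
      using Suc.IH[of "a - 1"] below by (simp add: sum_divide_distrib[symmetric])
  qed
  finally have rest: "(\<Sum>j<r. mzv_trunc (1 # replicate j 1 @ 2 # replicate (r - 1 - j) 1) N)
      = (\<Sum>a=1..N. (\<Sum>i<a. ones_two_at r i) / real a)" .
  have "(\<Sum>j<Suc r. mzv_trunc (replicate j 1 @ 2 # replicate (Suc r - 1 - j) 1) N)
      = mzv_trunc (2 # replicate r 1) N + (\<Sum>j<r. mzv_trunc (1 # replicate j 1 @ 2 # replicate (r - 1 - j) 1) N)"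
    by (simp add: sum.lessThan_Suc_shift del: sum.lessThan_Suc)
  also have "\<dots> = (\<Sum>a=1..N. ones_two_at (Suc r) a)"
    unfolding first rest by (simp add: sum.distrib[symmetric] cesaro_mean_def add.commute)
  also have "\<dots> = (\<Sum>i\<le>N. ones_two_at (Suc r) i)"
    by (simp add: atMost_atLeast0 sum.atLeast_Suc_atMost)
  finally show ?case .
qed

lemma mzv_trunc_ones_two_pred:
  assumes "a \<ge> 1"
  shows "(\<Sum>j<m. mzv_trunc (replicate j 1 @ 2 # replicate (m - 1 - j) 1) (a - 1))
      = real a * cesaro_mean (ones_two_at m) a"
proof -
  have "{..a - 1} = {..<a}"
    using assms by auto
  then show ?thesis
    using assms mzv_trunc_ones_two[of m "a - 1"] by (simp add: cesaro_mean_def)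
qed

lemma suminf_connector_ones_at:
  assumes a: "a \<ge> 1" and "p \<ge> 0" "q \<ge> 0"
  shows "(\<Sum>b. ennreal ((p * connector a b + q * connector_harm a b) * ones_at u b))
       = ennreal (p / real a ^ u + q * real u / real a ^ Suc u)"
  using assms(2,3)
proof (induction u arbitrary: p q)
  case 0
  then show ?case by (subst suminf_finite[of "{0}"]) auto
next
  case (Suc u)
  have "(\<Sum>b. ennreal ((p * connector a b + q * connector_harm a b) * ones_at (Suc u) b))
      = (\<Sum>b. ennreal (((p / real a + q / real a ^ 2) * connector a b + q / real a * connector_harm a b) * ones_at u b))"
    using Suc.prems by (simp add: transport_right[OF a] ones_at_nonneg)
  also have "\<dots> = ennreal ((p / real a + q / real a ^ 2) / real a ^ u
      + q / real a * real u / real a ^ Suc u)"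
    using Suc.prems by (intro Suc.IH) auto
  also have "(p / real a + q / real a ^ 2) / real a ^ u + q / real a * real u / real a ^ Suc u
      = p / real a ^ Suc u + q * real (Suc u) / real a ^ Suc (Suc u)"
    using a by (simp add: field_simps power2_eq_square)
  finally show ?case .
qed

lemma suminf_ones_at_connector:
  "b \<ge> 1 \<Longrightarrow> (\<Sum>a. ennreal (ones_at u a * connector a b)) = ennreal (1 / real b ^ u)"
  using suminf_connector_ones_at[of b 1 0 u] by (simp add: connector_commute mult.commute)

lemma suminf_ones_two_at_connector:
  assumes b: "b \<ge> 1"
  shows "(\<Sum>a. ennreal (ones_two_at u a * connector a b + ones_at u a * connector_harm a b))
       = ennreal (harm b / real b ^ u)"
proof (induction u)
  case 0
  then show ?case by (subst suminf_finite[of "{0}"]) auto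
next
  case (Suc u)
  have "(\<Sum>a. ennreal (ones_two_at (Suc u) a * connector a b + ones_at (Suc u) a * connector_harm a b))
      = (\<Sum>a. ennreal ((ones_two_at u a * connector a b + ones_at u a * connector_harm a b) / real b))"
    using transport_left[OF b ones_at_nonneg ones_two_at_nonneg] by simp
  also have "\<dots> = (\<Sum>a. ennreal (ones_two_at u a * connector a b
      + ones_at u a * connector_harm a b) * ennreal (1 / real b))"
    by (intro suminf_cong, subst ennreal_mult[symmetric])
       (simp_all add: ones_at_nonneg ones_two_at_nonneg connector_nonneg connector_harm_nonneg)
  also have "\<dots> = ennreal (harm b / real b ^ u) * ennreal (1 / real b)"
    by (simp add: Suc.IH)
  also have "\<dots> = ennreal (harm b / real b ^ Suc u)"
    by (simp add: ennreal_mult[symmetric] harm_nonneg)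
  finally show ?case .
qed

lemma suminf_ones_at_ratio:
  assumes "c \<ge> 1"
  shows "(\<Sum>b. ennreal (ones_at u b * (real c / real (b + c))))
      = ennreal (mzv_star_trunc (replicate u 1) c)"
  using assms
proof (induction u arbitrary: c)
  case 0
  then show ?case by (subst suminf_finite[of "{0}"]) auto
next
  case (Suc u)
  have mean: "ones_at (Suc u) b * (real c / real (b + c))
      = (\<Sum>i<b. ones_at u i * (real c / (real b * real (b + c))))" for b
    by (simp add: cesaro_mean_def sum_distrib_right sum_divide_distrib)
  have gap: "ennreal (ones_at u i * harm_gap i c)
      = (\<Sum>d=1..c. ennreal (1 / real d) * ennreal (ones_at u i * (real d / real (i + d))))" for i
  proof -
    have "ones_at u i * harm_gap i c = (\<Sum>d=1..c. 1 / real d * (ones_at u i * (real d / real (i + d))))"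
      unfolding harm_gap_def sum_distrib_left by (intro sum.cong) auto
    also have "ennreal \<dots> = (\<Sum>d=1..c. ennreal (1 / real d * (ones_at u i * (real d / real (i + d)))))"
      by (rule sum_ennreal[symmetric]) (simp add: ones_at_nonneg)
    also have "\<dots> = (\<Sum>d=1..c. ennreal (1 / real d) * ennreal (ones_at u i * (real d / real (i + d))))"
      by (intro sum.cong refl ennreal_mult) (simp_all add: ones_at_nonneg)
    finally show ?thesis .
  qed
  have "(\<Sum>b. ennreal (ones_at (Suc u) b * (real c / real (b + c))))
      = (\<Sum>i. \<Sum>b. ennreal (if i < b then ones_at u i * (real c / (real b * real (b + c))) else 0))"
    unfolding mean by (intro suminf_ennreal_triangle) (simp add: ones_at_nonneg)
  also have "\<dots> = (\<Sum>i. ennreal (ones_at u i * harm_gap i c))"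
    by (simp only: harm_gap_tail[OF Suc.prems ones_at_nonneg])
  also have "\<dots> = (\<Sum>i. \<Sum>d=1..c. ennreal (1 / real d) * ennreal (ones_at u i * (real d / real (i + d))))"
    by (simp only: gap)
  also have "\<dots> = (\<Sum>d=1..c. ennreal (1 / real d) * (\<Sum>i. ennreal (ones_at u i * (real d / real (i + d)))))"
    by (subst suminf_sum) auto
  also have "\<dots> = (\<Sum>d=1..c. ennreal (1 / real d) * ennreal (mzv_star_trunc (replicate u 1) d))"
  proof (intro sum.cong refl)
    fix d :: nat assume "d \<in> {1..c}"
    then show "ennreal (1 / real d) * (\<Sum>i. ennreal (ones_at u i * (real d / real (i + d))))
        = ennreal (1 / real d) * ennreal (mzv_star_trunc (replicate u 1) d)"
      using Suc.IH[of d] by simp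
  qed
  also have "\<dots> = ennreal (mzv_star_trunc (replicate (Suc u) 1) c)"
    by (simp add: ennreal_mult[symmetric] sum_ennreal mzv_star_trunc_nonneg)
  finally show ?case .
qed

section \<open>Duality\<close>

lemma ones_at_duality:
  assumes n: "n \<ge> 1"
  shows "(\<Sum>a. ennreal (ones_at (Suc r) a / real a ^ n)) = (\<Sum>b. ennreal (ones_at n b / real b ^ Suc r))"
proof -
  define h where "h a b = ennreal (ones_at (Suc r) a * (connector a b * ones_at n b))" for a b
  have rows: "(\<Sum>b. h a b) = ennreal (ones_at (Suc r) a / real a ^ n)" for a
  proof (cases "a = 0")
    case False
    have "(\<Sum>b. h a b) = ennreal (ones_at (Suc r) a) * (\<Sum>b. ennreal (connector a b * ones_at n b))"
      unfolding h_def
      by (rule suminf_ennreal_cmult_nonneg) (simp_all add: ones_at_nonneg cesaro_mean_nonneg connector_nonneg)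
    also have "(\<Sum>b. ennreal (connector a b * ones_at n b)) = ennreal (1 / real a ^ n)"
      using suminf_connector_ones_at[of a 1 0 n] False by simp
    finally show ?thesis
      by (simp add: ennreal_mult[symmetric] ones_at_nonneg cesaro_mean_nonneg)
  qed (simp add: h_def)
  have cols: "(\<Sum>a. h a b) = ennreal (ones_at n b / real b ^ Suc r)" for b
  proof (cases "b = 0")
    case False
    have "(\<Sum>a. h a b) = (\<Sum>a. ennreal (ones_at (Suc r) a * connector a b)) * ennreal (ones_at n b)"
      unfolding h_def mult.assoc[symmetric]
      by (rule suminf_ennreal_multc_nonneg)
         (simp_all add: ones_at_nonneg cesaro_mean_nonneg connector_nonneg)
    also have "\<dots> = ennreal (1 / real b ^ Suc r) * ennreal (ones_at n b)"
      using False suminf_ones_at_connector[of b "Suc r"] by simp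
    finally show ?thesis
      by (simp add: ennreal_mult[symmetric] ones_at_nonneg)
  qed (use n in \<open>simp add: h_def\<close>)
  show ?thesis
    unfolding rows[symmetric] cols[symmetric] by (rule suminf_ennreal_commute)
qed

lemma ones_two_at_duality:
  assumes n: "n \<ge> 1" and k: "k \<ge> 1"
  shows "(\<Sum>a. ennreal (ones_two_at k a / real a ^ n + real n * ones_at k a / real a ^ Suc n))
       = (\<Sum>b. ennreal (harm b * ones_at n b / real b ^ k))"
proof -
  define h where "h a b = ennreal ((ones_two_at k a * connector a b
      + ones_at k a * connector_harm a b) * ones_at n b)" for a b
  have rows: "(\<Sum>b. h a b) = ennreal (ones_two_at k a / real a ^ n
      + real n * ones_at k a / real a ^ Suc n)" for a
  proof (cases "a = 0")
    case False
    have "(\<Sum>b. h a b) = ennreal (ones_two_at k a / real a ^ n + ones_at k a * real n / real a ^ Suc n)"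
      unfolding h_def using False
      by (intro suminf_connector_ones_at) (simp_all add: ones_at_nonneg ones_two_at_nonneg)
    then show ?thesis
      by (simp add: mult.commute)
  qed (use k in \<open>simp add: h_def\<close>)
  have cols: "(\<Sum>a. h a b) = ennreal (harm b * ones_at n b / real b ^ k)" for b
  proof (cases "b = 0")
    case False
    have "(\<Sum>a. h a b) = (\<Sum>a. ennreal (ones_two_at k a * connector a b
        + ones_at k a * connector_harm a b)) * ennreal (ones_at n b)"
      unfolding h_def
      by (rule suminf_ennreal_multc_nonneg)
         (simp_all add: ones_at_nonneg ones_two_at_nonneg connector_nonneg connector_harm_nonneg)
    also have "\<dots> = ennreal (harm b / real b ^ k) * ennreal (ones_at n b)"
      using False by (simp add: suminf_ones_two_at_connector)
    finally show ?thesis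
      by (simp add: ennreal_mult[symmetric] ones_at_nonneg harm_nonneg)
  qed (use n in \<open>simp add: h_def\<close>)
  show ?thesis
    unfolding rows[symmetric] cols[symmetric] by (rule suminf_ennreal_commute)
qed

lemma summable_ones_at_div_power:
  assumes "s \<ge> 1"
  shows "summable (\<lambda>a. ones_at (Suc r) a / real a ^ s)"
proof (rule summable_comparison_test')
  have eq: "ones_at 1 b / real b ^ Suc r = 1 / real b ^ Suc (Suc r)" for b
    unfolding ones_at_1 by (simp add: divide_divide_eq_left)
  have "(\<Sum>a. ennreal (ones_at (Suc r) a / real a ^ 1)) = (\<Sum>b. ennreal (ones_at 1 b / real b ^ Suc r))"
    by (rule ones_at_duality) simp
  also have "\<dots> = (\<Sum>b. ennreal (1 / real b ^ Suc (Suc r)))"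
    unfolding eq ..
  finally have "(\<Sum>a. ennreal (ones_at (Suc r) a / real a ^ 1))
      = (\<Sum>b. ennreal (1 / real b ^ Suc (Suc r)))" .
  then show "summable (\<lambda>a. ones_at (Suc r) a / real a ^ 1)"
  proof (rule summable_if_suminf_ennreal_eq)
    show "summable (\<lambda>b. 1 / real b ^ Suc (Suc r))"
      using inverse_power_summable[of "Suc (Suc r)"] by (simp add: inverse_eq_divide)
  qed (simp_all add: ones_at_nonneg cesaro_mean_nonneg del: ones_at.simps)
  show "norm (ones_at (Suc r) a / real a ^ s) \<le> ones_at (Suc r) a / real a ^ 1" for a
  proof (cases "a = 0")
    case False
    then have "real a ^ 1 \<le> real a ^ s"
      using assms by (intro power_increasing) auto
    then show ?thesis
      using False ones_at_nonneg[of "Suc r" a] by (simp add: divide_left_mono del: ones_at.simps)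
  qed simp
qed

lemma mzv_ones_sums:
  assumes "s \<ge> 1"
  shows "(\<lambda>a. ones_at (Suc r) a / real a ^ s) sums mzv (Suc s # replicate r 1)"
proof -
  have eq: "(\<lambda>a. mzv_trunc (replicate r 1) (a - 1) / real a ^ Suc s)
      = (\<lambda>a. ones_at (Suc r) a / real a ^ s)"
  proof
    fix a
    show "mzv_trunc (replicate r 1) (a - 1) / real a ^ Suc s = ones_at (Suc r) a / real a ^ s"
      using mzv_trunc_ones_pred[of a r] by (cases "a = 0") (simp_all del: ones_at.simps)
  qed
  show ?thesis
    by (rule mzv_Cons_sums[of "Suc s" "replicate r 1", unfolded eq, OF _ summable_ones_at_div_power[OF assms]]) simp
qed

lemma mzv_ones_duality_sums:
  assumes "n \<ge> 1"
  shows "(\<lambda>b. ones_at n b / real b ^ Suc r) sums mzv ((n + 1) # replicate r 1)"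
proof (rule suminf_ennreal_imp_sums)
  have "(\<Sum>b. ennreal (ones_at n b / real b ^ Suc r)) = (\<Sum>a. ennreal (ones_at (Suc r) a / real a ^ n))"
    by (rule ones_at_duality[OF assms, symmetric])
  also have "\<dots> = ennreal (mzv ((n + 1) # replicate r 1))"
    using mzv_ones_sums[OF assms, of r]
    by (intro suminf_ennreal_eq) (simp_all add: ones_at_nonneg del: ones_at.simps)
  finally show "(\<Sum>b. ennreal (ones_at n b / real b ^ Suc r)) = ennreal (mzv ((n + 1) # replicate r 1))" .
qed (simp_all add: ones_at_nonneg mzv_nonneg)

lemma summable_harm_ones_at:
  assumes n: "n \<ge> 1" and k: "k \<ge> 1"
  shows "summable (\<lambda>b. harm b * ones_at n b / real b ^ k)"
proof (rule summable_comparison_test')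
  have eq: "ones_two_at 1 a / real a ^ n + real n * ones_at 1 a / real a ^ Suc n
      = real (Suc n) * (1 / real a ^ (n + 2))" for a
    unfolding ones_two_at_1 ones_at_1 by (cases "a = 0") (simp_all add: field_simps power2_eq_square)
  have "(\<Sum>b. ennreal (harm b * ones_at n b / real b ^ 1))
      = (\<Sum>a. ennreal (ones_two_at 1 a / real a ^ n + real n * ones_at 1 a / real a ^ Suc n))"
    by (rule ones_two_at_duality[OF n, symmetric]) simp
  also have "\<dots> = (\<Sum>a. ennreal (real (Suc n) * (1 / real a ^ (n + 2))))"
    unfolding eq ..
  finally show "summable (\<lambda>b. harm b * ones_at n b / real b ^ 1)"
  proof (rule summable_if_suminf_ennreal_eq)
    show "summable (\<lambda>a. real (Suc n) * (1 / real a ^ (n + 2)))"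
      using inverse_power_summable[of "n + 2"] by (intro summable_mult) (simp add: inverse_eq_divide)
  qed (simp_all add: ones_at_nonneg harm_nonneg del: ones_at.simps)
  show "norm (harm b * ones_at n b / real b ^ k) \<le> harm b * ones_at n b / real b ^ 1" for b
  proof (cases "b = 0")
    case False
    then have "real b ^ 1 \<le> real b ^ k"
      using k by (intro power_increasing) auto
    then show ?thesis
      using False by (simp add: divide_left_mono harm_nonneg ones_at_nonneg del: ones_at.simps)
  qed (use n in simp)
qed

lemma mzv_ones_two_sums:
  assumes n: "n \<ge> 1" and summable: "summable (\<lambda>a. cesaro_mean (ones_two_at m) a / real a ^ n)"
  shows "(\<lambda>a. cesaro_mean (ones_two_at m) a / real a ^ n)
           sums (\<Sum>j<m. mzv (Suc n # replicate j 1 @ 2 # replicate (m - 1 - j) 1))"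
proof -
  define L where "L j = replicate j 1 @ 2 # replicate (m - 1 - j) (1 :: nat)" for j
  have total: "(\<Sum>j<m. mzv_trunc (L j) (a - 1) / real a ^ Suc n)
      = cesaro_mean (ones_two_at m) a / real a ^ n" for a
  proof (cases "a = 0")
    case False
    then show ?thesis
      using mzv_trunc_ones_two_pred[of a m] by (simp add: L_def sum_divide_distrib[symmetric])
  qed simp
  have "(\<lambda>a. mzv_trunc (L j) (a - 1) / real a ^ Suc n) sums mzv (Suc n # L j)" if "j < m" for j
  proof (rule mzv_Cons_sums)
    show "summable (\<lambda>a. mzv_trunc (L j) (a - 1) / real a ^ Suc n)"
    proof (rule summable_comparison_test'[OF summable])
      fix a
      have "mzv_trunc (L j) (a - 1) / real a ^ Suc n \<le> (\<Sum>j<m. mzv_trunc (L j) (a - 1) / real a ^ Suc n)"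
        using that by (intro member_le_sum) (simp_all add: mzv_trunc_nonneg)
      then show "norm (mzv_trunc (L j) (a - 1) / real a ^ Suc n)
          \<le> cesaro_mean (ones_two_at m) a / real a ^ n"
        using total[of a] by (simp add: mzv_trunc_nonneg)
    qed
  qed simp
  then have "(\<lambda>a. \<Sum>j<m. mzv_trunc (L j) (a - 1) / real a ^ Suc n) sums (\<Sum>j<m. mzv (Suc n # L j))"
    by (intro sums_sum) simp
  moreover have "(\<lambda>a. \<Sum>j<m. mzv_trunc (L j) (a - 1) / real a ^ Suc n)
      = (\<lambda>a. cesaro_mean (ones_two_at m) a / real a ^ n)"
    using total by (rule ext)
  ultimately show ?thesis
    unfolding L_def by simp
qed

lemma harm_ones_at_sums:
  assumes n: "n \<ge> 1" and k: "k \<ge> 1"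
  shows "(\<lambda>b. harm b * ones_at n b / real b ^ k) sums
    ((\<Sum>j<k - 1. mzv ((n + 1) # replicate j 1 @ [2] @ replicate (k - 2 - j) 1))
      + real (n + 1) * mzv ((n + 2) # replicate (k - 1) 1))"
proof -
  obtain m where m: "k = Suc m"
    using k by (cases k) auto
  define W where "W a = ones_two_at k a / real a ^ n + real n * ones_at k a / real a ^ Suc n" for a
  have W_split: "W a = cesaro_mean (ones_two_at m) a / real a ^ n
      + real (Suc n) * (ones_at (Suc m) a / real a ^ Suc n)" for a
    by (cases "a = 0") (simp_all add: W_def m field_simps)
  have W_suminf: "(\<Sum>a. ennreal (W a)) = (\<Sum>b. ennreal (harm b * ones_at n b / real b ^ k))"
    unfolding W_def by (rule ones_two_at_duality[OF n k])
  have "summable W"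
    using W_suminf summable_harm_ones_at[OF n k]
    by (rule summable_if_suminf_ennreal_eq)
       (simp_all add: W_def ones_at_nonneg ones_two_at_nonneg harm_nonneg del: ones_at.simps)
  then have "summable (\<lambda>a. cesaro_mean (ones_two_at m) a / real a ^ n)"
    by (rule summable_comparison_test'[where N = 0])
       (simp add: W_split ones_at_nonneg ones_two_at_nonneg cesaro_mean_nonneg del: ones_at.simps)
  then have "W sums ((\<Sum>j<m. mzv (Suc n # replicate j 1 @ 2 # replicate (m - 1 - j) 1))
      + real (Suc n) * mzv (Suc (Suc n) # replicate m 1))"
    unfolding W_split by (intro sums_add sums_mult mzv_ones_two_sums mzv_ones_sums n) simp_all
  then have "(\<Sum>b. ennreal (harm b * ones_at n b / real b ^ k))
      = ennreal ((\<Sum>j<m. mzv (Suc n # replicate j 1 @ 2 # replicate (m - 1 - j) 1))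
      + real (Suc n) * mzv (Suc (Suc n) # replicate m 1))"
    unfolding W_suminf[symmetric]
    by (rule suminf_ennreal_eq[rotated]) (simp add: W_def ones_at_nonneg ones_two_at_nonneg del: ones_at.simps)
  then show ?thesis
    by (intro suminf_ennreal_imp_sums)
       (simp_all add: m harm_nonneg ones_at_nonneg mzv_nonneg sum_nonneg numeral_2_eq_2 del: ones_at.simps)
qed

section \<open>Partial fractions\<close>

lemma partial_fraction:
  fixes x y :: real
  assumes x: "x > 0" and y: "y > 0"
  shows "1 / (x ^ Suc m * (y + x))
       = (\<Sum>r<m. (-1) ^ r / (x ^ (Suc m - r) * y ^ Suc r)) + (-1) ^ m / (y ^ m * (x * (y + x)))"
proof (induction m)
  case 0
  then show ?case by simp
next
  case (Suc m)
  have step: "1 / (x * X * (y + x)) = 1 / (x * X * y) - 1 / y * (1 / (X * (y + x)))" if "X > 0" for X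
    using x y that by (simp add: divide_simps)
  have "x ^ Suc m > 0"
    using x by simp
  from step[OF this]
  have "1 / (x ^ Suc (Suc m) * (y + x))
      = 1 / (x ^ Suc (Suc m) * y) - 1 / y * (1 / (x ^ Suc m * (y + x)))"
    by (simp add: mult.assoc)
  also have "\<dots> = 1 / (x ^ Suc (Suc m) * y) + (\<Sum>r<m. (-1) ^ Suc r / (x ^ (Suc m - r) * y ^ Suc (Suc r)))
      + (-1) ^ Suc m / (y ^ Suc m * (x * (y + x)))"
  proof -
    have A: "1 / y * ((-1) ^ r / (x ^ (Suc m - r) * y ^ Suc r))
        = - ((-1) ^ Suc r / (x ^ (Suc m - r) * y ^ Suc (Suc r)))" for r
      by simp
    have C: "1 / y * ((-1) ^ m / (y ^ m * (x * (y + x))))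
        = - ((-1) ^ Suc m / (y ^ Suc m * (x * (y + x))))"
      by simp
    show ?thesis
      unfolding Suc.IH unfolding distrib_left[of "1 / y"] sum_distrib_left[of "1 / y"] A C
      by (simp add: sum_negf)
  qed
  also have "\<dots> = (\<Sum>r<Suc m. (-1) ^ r / (x ^ (Suc (Suc m) - r) * y ^ Suc r))
      + (-1) ^ Suc m / (y ^ Suc m * (x * (y + x)))"
    by (simp add: sum.lessThan_Suc_shift del: sum.lessThan_Suc)
  finally show ?case .
qed

lemma harm_div_sums:
  assumes "b \<ge> 1"
  shows "(\<lambda>c. 1 / (real c * real (c + b))) sums (harm b / real b)"
proof (rule suminf_ennreal_imp_sums)
  have eq: "(if 0 < c then 1 / real b * (real b / (real c * real (c + b))) else 0)
      = 1 / (real c * real (c + b))" for c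
    using assms by simp
  have "(\<Sum>c. ennreal (if 0 < c then 1 / real b * (real b / (real c * real (c + b))) else 0))
      = ennreal (1 / real b * harm_gap 0 b)"
    using assms by (intro harm_gap_tail) simp_all
  then show "(\<Sum>c. ennreal (1 / (real c * real (c + b)))) = ennreal (harm b / real b)"
    unfolding eq by simp
qed (simp_all add: harm_nonneg)

lemma partial_fraction_sums:
  assumes k: "k \<ge> 1" and b: "b \<ge> 1"
  shows "(\<lambda>c. 1 / (real c ^ k * real (b + c)))
           sums ((\<Sum>r<k - 1. (-1) ^ r * mzv [k - r] / real b ^ Suc r) + (-1) ^ (k - 1) * harm b / real b ^ k)"
proof -
  obtain m where m: "k = Suc m"
    using k by (cases k) auto
  have terms: "1 / (real c ^ k * real (b + c))
      = (\<Sum>r<m. (-1) ^ r / real b ^ Suc r * (1 / real c ^ (k - r))) + (-1) ^ m / real b ^ m * (1 / (real c * real (c + b)))" for c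
  proof (cases "c = 0")
    case False
    then show ?thesis
      using partial_fraction[of "real c" "real b" m] b by (simp add: m add.commute mult.commute)
  qed (auto simp: m intro!: sum.neutral)
  have "(\<lambda>c. (\<Sum>r<m. (-1) ^ r / real b ^ Suc r * (1 / real c ^ (k - r)))
      + (-1) ^ m / real b ^ m * (1 / (real c * real (c + b))))
      sums ((\<Sum>r<m. (-1) ^ r / real b ^ Suc r * mzv [k - r]) + (-1) ^ m / real b ^ m * (harm b / real b))"
    using b by (intro sums_add sums_sum sums_mult mzv_singleton_sums harm_div_sums) (auto simp: m)
  then show ?thesis
    unfolding terms[symmetric] by (simp add: m field_simps)
qed

lemma suminf_mzv_star_trunc_ones:
  assumes k: "k \<ge> 1"
  shows "(\<Sum>c. ennreal (mzv_star_trunc (replicate n 1) c / real c ^ Suc k))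
       = (\<Sum>b. \<Sum>c. ennreal (ones_at n b / (real c ^ k * real (b + c))))"
proof -
  have pointwise: "ennreal (mzv_star_trunc (replicate n 1) c / real c ^ Suc k)
      = (\<Sum>b. ennreal (ones_at n b / (real c ^ k * real (b + c))))" for c
  proof (cases "c = 0")
    case False
    have ratio: "ennreal (mzv_star_trunc (replicate n 1) c)
        = (\<Sum>b. ennreal (ones_at n b * (real c / real (b + c))))"
      using False by (intro suminf_ones_at_ratio[symmetric]) simp
    have "ennreal (mzv_star_trunc (replicate n 1) c / real c ^ Suc k)
        = ennreal (1 / real c ^ Suc k) * ennreal (mzv_star_trunc (replicate n 1) c)"
      by (simp add: ennreal_mult[symmetric] mzv_star_trunc_nonneg)
    also have "\<dots> = ennreal (1 / real c ^ Suc k) * (\<Sum>b. ennreal (ones_at n b * (real c / real (b + c))))"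
      unfolding ratio ..
    also have "\<dots> = (\<Sum>b. ennreal (1 / real c ^ Suc k * (ones_at n b * (real c / real (b + c)))))"
      by (rule suminf_ennreal_cmult_nonneg[symmetric]) (simp_all add: ones_at_nonneg del: ones_at.simps)
    also have "\<dots> = (\<Sum>b. ennreal (ones_at n b / (real c ^ k * real (b + c))))"
      using False by (simp add: field_simps)
    finally show ?thesis .
  qed (use k in \<open>simp add: power_0_left\<close>)
  have "(\<Sum>c. ennreal (mzv_star_trunc (replicate n 1) c / real c ^ Suc k))
      = (\<Sum>c. \<Sum>b. ennreal (ones_at n b / (real c ^ k * real (b + c))))"
    by (intro suminf_cong pointwise)
  also have "\<dots> = (\<Sum>b. \<Sum>c. ennreal (ones_at n b / (real c ^ k * real (b + c))))"
    by (rule suminf_ennreal_commute)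
  finally show ?thesis .
qed

definition shifted_zeta :: "nat \<Rightarrow> nat \<Rightarrow> real" where
  "shifted_zeta k b = (\<Sum>c. 1 / (real c ^ k * real (b + c)))"

lemma ones_at_mult_shifted_zeta_nonneg:
  assumes k: "k \<ge> 1" and n: "n \<ge> 1"
  shows "ones_at n b * shifted_zeta k b \<ge> 0"
proof (cases "b = 0")
  case False
  then have "shifted_zeta k b \<ge> 0"
    unfolding shifted_zeta_def using partial_fraction_sums[OF k, of b]
    by (intro suminf_nonneg) (auto simp: sums_iff)
  then show ?thesis
    by (simp add: ones_at_nonneg del: ones_at.simps)
qed (use n in simp)

lemma suminf_ennreal_ones_at_shifted_zeta:
  assumes k: "k \<ge> 1" and n: "n \<ge> 1"
  shows "(\<Sum>c. ennreal (ones_at n b / (real c ^ k * real (b + c))))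
      = ennreal (ones_at n b * shifted_zeta k b)"
proof (cases "b = 0")
  case False
  then have "(\<lambda>c. ones_at n b * (1 / (real c ^ k * real (b + c)))) sums (ones_at n b * shifted_zeta k b)"
    unfolding shifted_zeta_def using partial_fraction_sums[OF k, of b]
    by (intro sums_mult summable_sums) (auto simp: sums_iff)
  then show ?thesis
    by (intro suminf_ennreal_eq) (simp_all add: ones_at_nonneg del: ones_at.simps)
qed (use n in simp)

lemma ones_at_shifted_zeta_sums:
  assumes k: "k \<ge> 1" and n: "n \<ge> 1"
  shows "(\<lambda>b. ones_at n b * shifted_zeta k b) sums
    ((-1) ^ (k - 1) *
      ((\<Sum>j<k - 1. mzv ((n + 1) # replicate j 1 @ [2] @ replicate (k - 2 - j) 1))
       + real (n + 1) * mzv ((n + 2) # replicate (k - 1) 1))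
    + (\<Sum>r<k - 1. (-1) ^ r * mzv [k - r] * mzv ((n + 1) # replicate r 1)))"
  (is "_ sums ?R")
proof -
  have "ones_at n b * shifted_zeta k b
      = (-1) ^ (k - 1) * (harm b * ones_at n b / real b ^ k)
        + (\<Sum>r<k - 1. (-1) ^ r * mzv [k - r] * (ones_at n b / real b ^ Suc r))" for b
  proof (cases "b = 0")
    case False
    then have "shifted_zeta k b
        = (\<Sum>r<k - 1. (-1) ^ r * mzv [k - r] / real b ^ Suc r) + (-1) ^ (k - 1) * harm b / real b ^ k"
      unfolding shifted_zeta_def using partial_fraction_sums[OF k, of b] by (simp add: sums_iff)
    then show ?thesis
      by (simp add: sum_distrib_left algebra_simps)
  qed (use n in simp)
  moreover have "(\<lambda>b. (-1) ^ (k - 1) * (harm b * ones_at n b / real b ^ k)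
      + (\<Sum>r<k - 1. (-1) ^ r * mzv [k - r] * (ones_at n b / real b ^ Suc r))) sums ?R"
    using assms by (intro sums_add sums_mult sums_sum harm_ones_at_sums mzv_ones_duality_sums) auto
  ultimately show ?thesis
    by simp
qed

theorem theorem2p8:
  fixes k n :: nat
  assumes "k \<ge> 1" and "n \<ge> 1"
  shows "mzv_star ((k + 1) # replicate n 1) =
    (-1) ^ (k - 1) *
      ((\<Sum>j<k - 1. mzv ((n + 1) # replicate j 1 @ [2] @ replicate (k - 2 - j) 1))
       + real (n + 1) * mzv ((n + 2) # replicate (k - 1) 1))
    + (\<Sum>r<k - 1. (-1) ^ r * mzv [k - r] * mzv ((n + 1) # replicate r 1))"
  (is "_ = ?R")
proof -
  have R: "(\<lambda>b. ones_at n b * shifted_zeta k b) sums ?R"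
    using assms by (rule ones_at_shifted_zeta_sums)
  have "(\<Sum>c. ennreal (mzv_star_trunc (replicate n 1) c / real c ^ Suc k))
      = (\<Sum>b. \<Sum>c. ennreal (ones_at n b / (real c ^ k * real (b + c))))"
    using assms(1) by (rule suminf_mzv_star_trunc_ones)
  also have "\<dots> = (\<Sum>b. ennreal (ones_at n b * shifted_zeta k b))"
    using assms by (intro suminf_cong suminf_ennreal_ones_at_shifted_zeta)
  also have "\<dots> = ennreal ?R"
    using R by (rule suminf_ennreal_eq[rotated]) (rule ones_at_mult_shifted_zeta_nonneg[OF assms])
  finally have "(\<lambda>c. mzv_star_trunc (replicate n 1) c / real c ^ Suc k) sums ?R"
    using sums_le[OF ones_at_mult_shifted_zeta_nonneg[OF assms] sums_zero R]
    by (intro suminf_ennreal_imp_sums) (simp_all add: mzv_star_trunc_nonneg)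
  moreover have "(\<lambda>c. mzv_star_trunc (replicate n 1) c / real c ^ Suc k) sums mzv_star (Suc k # replicate n 1)"
    using calculation by (intro mzv_star_Cons_sums sums_summable) auto
  ultimately show ?thesis
    by (simp add: sums_unique2)
qed

end
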